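(* Let $A\subseteq[n]^2$, let $\Gamma=\Gamma(A)$ be the gate defined below, and let $x\in\{0,1\}^{4n}$ satisfy $\varphi_{one}(x)$. (i) If $x_W\ne x_E$ or $\mathrm{hw}(x_S)\ne1$, then $\mathrm{Sig}(\Gamma,x)=0$. (ii) If $\varphi_{prop}(x)$ holds, let $u=x_W$, $v=x_N$. Then $\mathrm{Sig}(\Gamma,x)=q_u-r_{u,v}-s_{u,v}-\alpha_{u,v}-\beta_{u,v}$ if $(u,v)\notin A$, and $\mathrm{Sig}(\Gamma,x)=q_u-r_{u,v}-s_{u,v}+1$ if $(u,v)\in A$. (iii) If $x_W=x_E$, $\mathrm{hw}(x_S)=1$ and $x_N\ne x_S$, let $u=x_W$, $v=x_N$, $w=x_S$. Then $\mathrm{Sig}(\Gamma,x)$ equals $p_{u,v,w}$ if $(u,v)\notin A,(u,w)\notin A$; $p_{u,v,w}+\alpha_{u,v}-\beta_{u,v}$ if $(u,v)\notin A,(u,w)\in A$; $p_{u,v,w}+\beta_{u,w}-\alpha_{u,w}$ if $(u,v)\in A,(u,w)\notin A$; and $p_{u,v,w}+\beta_{u,w}-\alpha_{u,w}+\alpha_{u,v}-\beta_{u,v}+1$ if $(u,v)\in A,(u,w)\in A$.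
   Context: $\Gamma(A)$: vertices $b_{i,j}$, $(i,j)\in[n]^2$, with the south edge of $b_{i,j}$ equal to the north edge of $b_{i+1,j}$ and the east edge of $b_{i,j}$ equal to the west edge of $b_{i,j+1}$; $4n$ dangling edges ordered as north edges of row $1$ (columns $1..n$), east edges of column $n$ (rows $1..n$), south edges of row $n$, west edges of column $1$; $x=x_Nx_Ex_Sx_W$ accordingly, and a weight-one string $0^{v-1}10^{n-v}\in\{0,1\}^n$ is identified with $v\in[n]$. Two apices $a_1,a_2$ with signature $\mathtt{HW}_{=1}$ (value $1$ iff exactly one incident edge active). For $\tau\notin A$, $b_\tau$ has signature $\mathtt{PASS}$; for $\tau\in A$, $b_\tau$ is also joined to $a_1$ and $a_2$ (its 5th and 6th edges) and has signature $\mathtt{PRE}$. All edge weights $1$. For $x\in\{0,1\}^4$ ordered north, east, south, west: $\mathtt{PASS}(1111)=-1$, $\mathtt{PASS}(0000)=\mathtt{PASS}(0101)=\mathtt{PASS}(1010)=1$, else $0$. For $x\in\{0,1\}^4,y\in\{0,1\}^2$: $\mathtt{PRE}(x00)=\mathtt{PASS}(x)$; $\mathtt{PRE}(xy)=1$ for $xy\in\{101011,111111,100001,110101,001010,011110\}$; else $0$. $\varphi_{one}(x)\equiv\mathrm{hw}(x_N)=\mathrm{hw}(x_W)=1$; $\varphi_{prop}(x)\equiv x_N=x_S\wedge x_W=x_E$. For $u,v\in[n]$: $\alpha_{u,v}=|A\cap\{(1,v),\dots,(u-1,v)\}|$, $\beta_{u,v}=|A\cap\{(u+1,v),\dots,(n,v)\}|$;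 $q_u=\sum_{z\in[n]}\big(\alpha_{u,z}\beta_{u,z}-\binom{\alpha_{u,z}}2-\binom{\beta_{u,z}}2\big)$; $p_{u,v,w}=(\alpha_{u,v}-\beta_{u,v})(\beta_{u,w}-\alpha_{u,w})$; $r_{u,v}=\sum_{z\in[n]\setminus\{v\},(u,z)\in A}\beta_{u,z}$; $s_{u,v}=\sum_{z\in[n]\setminus\{v\},(u,z)\in A}\alpha_{u,z}$. $\mathrm{Sig}(\Gamma,x)=\sum_y w_\Gamma(xy)\prod_v f_v((xy)|_{I(v)})$ over assignments $y$ to the non-dangling edges. *)

theory Defs
  imports Main "HOL-Library.FuncSet"
begin

text \<open>Signatures. Argument order: north, east, south, west (then the two apex edges).\<close>

definition PASS :: "bool \<Rightarrow> bool \<Rightarrow> bool \<Rightarrow> bool \<Rightarrow> int" where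
  "PASS N E S W =
     (if N \<and> E \<and> S \<and> W then -1
      else if (\<not>N \<and> \<not>E \<and> \<not>S \<and> \<not>W) \<or> (\<not>N \<and> E \<and> \<not>S \<and> W) \<or> (N \<and> \<not>E \<and> S \<and> \<not>W) then 1
      else 0)"

definition PRE :: "bool \<Rightarrow> bool \<Rightarrow> bool \<Rightarrow> bool \<Rightarrow> bool \<Rightarrow> bool \<Rightarrow> int" where
  "PRE N E S W Y1 Y2 =
     (if \<not>Y1 \<and> \<not>Y2 then PASS N E S W
      else if [N,E,S,W,Y1,Y2] \<in> {[True,False,True,False,True,True],
                                  [True,True,True,True,True,True],
                                  [True,False,False,False,False,True],
                                  [True,True,False,True,False,True],
                                  [False,False,True,False,True,False],
                                  [False,True,True,True,True,False]} then 1
      else 0)"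

definition hw :: "bool list \<Rightarrow> nat" where
  "hw l = length (filter id l)"

definition onepos :: "bool list \<Rightarrow> nat" where
  "onepos l = Suc (LEAST i. i < length l \<and> l ! i)"

definition xN :: "nat \<Rightarrow> bool list \<Rightarrow> bool list" where "xN n x = take n x"
definition xE :: "nat \<Rightarrow> bool list \<Rightarrow> bool list" where "xE n x = take n (drop n x)"
definition xS :: "nat \<Rightarrow> bool list \<Rightarrow> bool list" where "xS n x = take n (drop (2*n) x)"
definition xW :: "nat \<Rightarrow> bool list \<Rightarrow> bool list" where "xW n x = take n (drop (3*n) x)"

text \<open>Non-dangling edges of Gamma(A):
  Vt i j : south edge of b_{i,j} = north edge of b_{i+1,j}   (1 \<le> i < n)
  Hz i j : east edge of b_{i,j} = west edge of b_{i,j+1}      (1 \<le> j < n)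
  Ap1 i j, Ap2 i j : edges from b_{i,j} to a_1, a_2           ((i,j) \<in> A)\<close>

datatype edge = Vt nat nat | Hz nat nat | Ap1 nat nat | Ap2 nat nat

definition inner_edges :: "nat \<Rightarrow> (nat \<times> nat) set \<Rightarrow> edge set" where
  "inner_edges n A =
     {Vt i j | i j. i \<in> {1..<n} \<and> j \<in> {1..n}} \<union>
     {Hz i j | i j. i \<in> {1..n} \<and> j \<in> {1..<n}} \<union>
     {Ap1 i j | i j. (i,j) \<in> A} \<union> {Ap2 i j | i j. (i,j) \<in> A}"

definition nedge :: "nat \<Rightarrow> bool list \<Rightarrow> (edge \<Rightarrow> bool) \<Rightarrow> nat \<Rightarrow> nat \<Rightarrow> bool" where
  "nedge n x y i j = (if i = 1 then xN n x ! (j-1) else y (Vt (i-1) j))"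
definition sedge :: "nat \<Rightarrow> bool list \<Rightarrow> (edge \<Rightarrow> bool) \<Rightarrow> nat \<Rightarrow> nat \<Rightarrow> bool" where
  "sedge n x y i j = (if i = n then xS n x ! (j-1) else y (Vt i j))"
definition wedge :: "nat \<Rightarrow> bool list \<Rightarrow> (edge \<Rightarrow> bool) \<Rightarrow> nat \<Rightarrow> nat \<Rightarrow> bool" where
  "wedge n x y i j = (if j = 1 then xW n x ! (i-1) else y (Hz i (j-1)))"
definition eedge :: "nat \<Rightarrow> bool list \<Rightarrow> (edge \<Rightarrow> bool) \<Rightarrow> nat \<Rightarrow> nat \<Rightarrow> bool" where
  "eedge n x y i j = (if j = n then xE n x ! (i-1) else y (Hz i j))"

definition vertex_val :: "nat \<Rightarrow> (nat \<times> nat) set \<Rightarrow> bool list \<Rightarrow> (edge \<Rightarrow> bool) \<Rightarrow> nat \<Rightarrow> nat \<Rightarrow> int" where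
  "vertex_val n A x y i j =
     (if (i,j) \<in> A
      then PRE (nedge n x y i j) (eedge n x y i j) (sedge n x y i j) (wedge n x y i j)
               (y (Ap1 i j)) (y (Ap2 i j))
      else PASS (nedge n x y i j) (eedge n x y i j) (sedge n x y i j) (wedge n x y i j))"

definition apex1_val :: "(nat \<times> nat) set \<Rightarrow> (edge \<Rightarrow> bool) \<Rightarrow> int" where
  "apex1_val A y = (if card {\<tau> \<in> A. y (Ap1 (fst \<tau>) (snd \<tau>))} = 1 then 1 else 0)"
definition apex2_val :: "(nat \<times> nat) set \<Rightarrow> (edge \<Rightarrow> bool) \<Rightarrow> int" where
  "apex2_val A y = (if card {\<tau> \<in> A. y (Ap2 (fst \<tau>) (snd \<tau>))} = 1 then 1 else 0)"

text \<open>Sig(Gamma(A), x): sum over assignments to the non-dangling edges (all edge weights 1).\<close>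
definition SigGamma :: "nat \<Rightarrow> (nat \<times> nat) set \<Rightarrow> bool list \<Rightarrow> int" where
  "SigGamma n A x =
     (\<Sum>y \<in> Pi\<^sub>E (inner_edges n A) (\<lambda>_. UNIV).
        (\<Prod>i\<in>{1..n}. \<Prod>j\<in>{1..n}. vertex_val n A x y i j) * apex1_val A y * apex2_val A y)"

definition alpha :: "nat \<Rightarrow> (nat \<times> nat) set \<Rightarrow> nat \<Rightarrow> nat \<Rightarrow> int" where
  "alpha n A u v = int (card {k \<in> {1..<u}. (k,v) \<in> A})"
definition beta :: "nat \<Rightarrow> (nat \<times> nat) set \<Rightarrow> nat \<Rightarrow> nat \<Rightarrow> int" where
  "beta n A u v = int (card {k \<in> {u<..n}. (k,v) \<in> A})"
definition qq :: "nat \<Rightarrow> (nat \<times> nat) set \<Rightarrow> nat \<Rightarrow> int" where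
  "qq n A u = (\<Sum>z\<in>{1..n}. alpha n A u z * beta n A u z
      - int (nat (alpha n A u z) choose 2) - int (nat (beta n A u z) choose 2))"
definition pp :: "nat \<Rightarrow> (nat \<times> nat) set \<Rightarrow> nat \<Rightarrow> nat \<Rightarrow> nat \<Rightarrow> int" where
  "pp n A u v w = (alpha n A u v - beta n A u v) * (beta n A u w - alpha n A u w)"
definition rr :: "nat \<Rightarrow> (nat \<times> nat) set \<Rightarrow> nat \<Rightarrow> nat \<Rightarrow> int" where
  "rr n A u v = (\<Sum>z \<in> {z \<in> {1..n} - {v}. (u,z) \<in> A}. beta n A u z)"
definition ss :: "nat \<Rightarrow> (nat \<times> nat) set \<Rightarrow> nat \<Rightarrow> nat \<Rightarrow> int" where
  "ss n A u v = (\<Sum>z \<in> {z \<in> {1..n} - {v}. (u,z) \<in> A}. alpha n A u z)"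

end

theory Submission
  imports Defs
begin

text \<open>
  A term of \<open>Sig(\<Gamma>,x)\<close> can only be nonzero if each apex has exactly one active edge, to
  vertices \<open>\<tau>1\<close> and \<open>\<tau>2\<close> of \<open>A\<close>. The signatures then determine all other edges: every row
  carries its west input unchanged to the east, and every column carries its north input
  southwards, flipped at \<open>\<tau>1\<close> and at \<open>\<tau>2\<close>. Hence \<open>Sig(\<Gamma>,x)\<close> is a sum over pairs
  \<open>(\<tau>1,\<tau>2) \<in> A\<^sup>2\<close> that match the east and south boundary, each contributing a product of
  signs. When \<open>x\<^sub>W\<close> and \<open>x\<^sub>N\<close> are unit vectors at \<open>u\<close> and \<open>v\<close>, only row \<open>u\<close> produces
  signs; in the turning case the pairs split as \<open>\<tau>1\<close> in column \<open>w\<close>, \<open>\<tau>2\<close> in column \<open>v\<close>, so the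
  sum factorises, and in the straight case both lie in one column, so counting the
  pairs of entries above and below row \<open>u\<close> in each column gives \<open>q\<^sub>u\<close>, \<open>r\<^sub>u\<^sub>,\<^sub>v\<close> and \<open>s\<^sub>u\<^sub>,\<^sub>v\<close>.
\<close>

section \<open>Counting around a pivot\<close>

lemma choose_two_int: "int (k choose 2) * 2 = int k * (int k - 1)"
proof (induction k)
  case (Suc k)
  have "Suc k choose 2 = k + (k choose 2)"
    by (simp add: numeral_2_eq_2)
  then show ?case
    using Suc by (simp add: algebra_simps)
qed simp

lemma sum_of_bool_less_pairs:
  fixes C :: "nat set"
  assumes "finite C"
  shows "2 * (\<Sum>a\<in>C. \<Sum>c\<in>C. of_bool (a < c)) = int (card C) * int (card C) - int (card C)"
proof -
  have "(\<Sum>a\<in>C. \<Sum>c\<in>C. of_bool (a < c) + of_bool (c < a) + of_bool (a = c)) = (\<Sum>a\<in>C. \<Sum>c\<in>C. 1 :: int)"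
    by (intro sum.cong refl) auto
  moreover have "(\<Sum>a\<in>C. \<Sum>c\<in>C. of_bool (c < a) :: int) = (\<Sum>a\<in>C. \<Sum>c\<in>C. of_bool (a < c))"
    by (rule sum.swap)
  moreover have "(\<Sum>a\<in>C. \<Sum>c\<in>C. of_bool (a = c) :: int) = int (card C)"
    using assms by (simp add: sum.delta)
  ultimately show ?thesis
    by (simp add: sum.distrib)
qed

lemma sum_of_bool_pivot:
  fixes C :: "nat set" and u :: nat
  assumes "finite C"
  defines "\<alpha> \<equiv> int (card {k\<in>C. k < u})" and "\<beta> \<equiv> int (card {k\<in>C. u < k})" and "m \<equiv> of_bool (u \<in> C) :: int"
  shows "(\<Sum>k\<in>C. of_bool (k < u)) = \<alpha>" "(\<Sum>k\<in>C. of_bool (u < k)) = \<beta>" "(\<Sum>k\<in>C. of_bool (k = u)) = m"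
    "(\<Sum>k\<in>C. of_bool (k \<le> u)) = \<alpha> + m" "(\<Sum>k\<in>C. of_bool (u \<le> k)) = \<beta> + m"
    "int (card C) = \<alpha> + \<beta> + m"
proof -
  show below: "(\<Sum>k\<in>C. of_bool (k < u)) = \<alpha>" and above: "(\<Sum>k\<in>C. of_bool (u < k)) = \<beta>"
    using assms by (simp_all add: Int_def conj_commute)
  show at: "(\<Sum>k\<in>C. of_bool (k = u)) = m"
    using assms by (simp add: sum.delta')
  have "(\<Sum>k\<in>C. of_bool (k \<le> u)) = (\<Sum>k\<in>C. of_bool (k < u) + of_bool (k = u) :: int)"
    by (intro sum.cong) auto
  then show "(\<Sum>k\<in>C. of_bool (k \<le> u)) = \<alpha> + m"
    by (simp only: sum.distrib below at)
  have "(\<Sum>k\<in>C. of_bool (u \<le> k)) = (\<Sum>k\<in>C. of_bool (u < k) + of_bool (k = u) :: int)"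
    by (intro sum.cong) auto
  then show "(\<Sum>k\<in>C. of_bool (u \<le> k)) = \<beta> + m"
    by (simp only: sum.distrib above at)
  have "(\<Sum>k\<in>C. of_bool (k < u) + of_bool (u < k) + of_bool (k = u) :: int) = (\<Sum>k\<in>C. 1)"
    by (intro sum.cong) auto
  then show "int (card C) = \<alpha> + \<beta> + m"
    by (simp only: sum.distrib below above at sum_constant mult_1_right)
qed

lemma sum_sign_pivot:
  fixes C :: "nat set" and u :: nat
  assumes "finite C"
  defines "\<alpha> \<equiv> int (card {k\<in>C. k < u})" and "\<beta> \<equiv> int (card {k\<in>C. u < k})" and "m \<equiv> of_bool (u \<in> C) :: int"
  shows "(\<Sum>k\<in>C. if k < u then -1 else 1) = \<beta> + m - \<alpha>"
    and "(\<Sum>k\<in>C. if u < k then -1 else 1) = \<alpha> + m - \<beta>"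
proof -
  have "(\<Sum>k\<in>C. if k < u then -1 else 1) = (\<Sum>k\<in>C. of_bool (u < k) + of_bool (k = u) - of_bool (k < u) :: int)"
    by (intro sum.cong) auto
  then show "(\<Sum>k\<in>C. if k < u then -1 else 1) = \<beta> + m - \<alpha>"
    using sum_of_bool_pivot[OF assms(1), of u] by (simp only: sum.distrib sum_subtractf \<alpha>_def \<beta>_def m_def)
  have "(\<Sum>k\<in>C. if u < k then -1 else 1) = (\<Sum>k\<in>C. of_bool (k < u) + of_bool (k = u) - of_bool (u < k) :: int)"
    by (intro sum.cong) auto
  then show "(\<Sum>k\<in>C. if u < k then -1 else 1) = \<alpha> + m - \<beta>"
    using sum_of_bool_pivot[OF assms(1), of u] by (simp only: sum.distrib sum_subtractf \<alpha>_def \<beta>_def m_def)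
qed

section \<open>Nonzero terms of the signature sum\<close>

lemma PRE_altdef:
  "PRE N E S W a b =
     (if E = W \<and> S = ((N \<noteq> a) \<noteq> b) \<and> (a \<or> b \<longrightarrow> N = b)
      then if W \<and> N \<and> \<not> a \<and> \<not> b then -1 else 1 else 0)"
  by (cases N; cases E; cases S; cases W; cases a; cases b) (simp_all add: PRE_def PASS_def)

lemma PASS_eq_PRE: "PASS N E S W = PRE N E S W False False"
  by (simp add: PRE_def)

lemma Vt_in_inner_edges [simp]: "Vt i j \<in> inner_edges n A \<longleftrightarrow> i \<in> {1..<n} \<and> j \<in> {1..n}"
  and Hz_in_inner_edges [simp]: "Hz i j \<in> inner_edges n A \<longleftrightarrow> i \<in> {1..n} \<and> j \<in> {1..<n}"
  and Ap1_in_inner_edges [simp]: "Ap1 i j \<in> inner_edges n A \<longleftrightarrow> (i,j) \<in> A"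
  and Ap2_in_inner_edges [simp]: "Ap2 i j \<in> inner_edges n A \<longleftrightarrow> (i,j) \<in> A"
  by (auto simp: inner_edges_def)

lemma finite_inner_edges:
  assumes "finite A"
  shows "finite (inner_edges n A)"
proof -
  have "inner_edges n A \<subseteq> case_prod Vt ` ({..n} \<times> {..n}) \<union> case_prod Hz ` ({..n} \<times> {..n})
      \<union> case_prod Ap1 ` A \<union> case_prod Ap2 ` A"
    by (auto simp: inner_edges_def image_iff)
  then show ?thesis
    by (rule finite_subset) (use assms in auto)
qed

definition apex_choice :: "(nat \<times> nat) set \<Rightarrow> (edge \<Rightarrow> bool) \<Rightarrow> nat \<times> nat \<Rightarrow> nat \<times> nat \<Rightarrow> bool" where
  "apex_choice A y \<tau>1 \<tau>2 \<longleftrightarrow> \<tau>1 \<in> A \<and> \<tau>2 \<in> A \<and>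
     (\<forall>i j. (i,j) \<in> A \<longrightarrow> y (Ap1 i j) = ((i,j) = \<tau>1) \<and> y (Ap2 i j) = ((i,j) = \<tau>2))"

lemma apex_choice_of_nonzero:
  assumes "apex1_val A y \<noteq> 0" "apex2_val A y \<noteq> 0"
  obtains \<tau>1 \<tau>2 where "apex_choice A y \<tau>1 \<tau>2"
proof -
  have "card {\<tau>\<in>A. y (Ap1 (fst \<tau>) (snd \<tau>))} = 1" "card {\<tau>\<in>A. y (Ap2 (fst \<tau>) (snd \<tau>))} = 1"
    using assms by (auto simp: apex1_val_def apex2_val_def split: if_splits)
  then obtain \<tau>1 \<tau>2 where
    \<tau>1: "{\<tau>\<in>A. y (Ap1 (fst \<tau>) (snd \<tau>))} = {\<tau>1}" and
    \<tau>2: "{\<tau>\<in>A. y (Ap2 (fst \<tau>) (snd \<tau>))} = {\<tau>2}"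
    by (meson card_1_singletonE)
  have "\<tau>1 \<in> A" "\<tau>2 \<in> A"
    using \<tau>1 \<tau>2 by blast+
  moreover have "y (Ap1 i j) = ((i,j) = \<tau>1)" "y (Ap2 i j) = ((i,j) = \<tau>2)" if "(i,j) \<in> A" for i j
    using that \<tau>1 \<tau>2 by (auto simp: set_eq_iff)
  ultimately have "apex_choice A y \<tau>1 \<tau>2"
    by (auto simp: apex_choice_def)
  then show thesis
    by (rule that)
qed

lemma apex_choice_Ap:
  assumes "apex_choice A y \<tau>1 \<tau>2" "(i,j) \<in> A"
  shows "y (Ap1 i j) = ((i,j) = \<tau>1)" "y (Ap2 i j) = ((i,j) = \<tau>2)"
  using assms unfolding apex_choice_def by blast+

lemma apex_vals_apex_choice:
  assumes "apex_choice A y \<tau>1 \<tau>2"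
  shows "apex1_val A y = 1" "apex2_val A y = 1"
proof -
  have "{\<tau>\<in>A. y (Ap1 (fst \<tau>) (snd \<tau>))} = {\<tau>1}" "{\<tau>\<in>A. y (Ap2 (fst \<tau>) (snd \<tau>))} = {\<tau>2}"
    using assms apex_choice_Ap[OF assms] unfolding apex_choice_def by auto
  then show "apex1_val A y = 1" "apex2_val A y = 1"
    by (simp_all add: apex1_val_def apex2_val_def)
qed

lemma apex_choice_unique:
  assumes "apex_choice A y \<tau>1 \<tau>2" "apex_choice A y \<sigma>1 \<sigma>2"
  shows "\<sigma>1 = \<tau>1" "\<sigma>2 = \<tau>2"
proof -
  have "\<sigma>1 \<in> A" "\<sigma>2 \<in> A"
    using assms(2) by (simp_all add: apex_choice_def)
  then show "\<sigma>1 = \<tau>1" "\<sigma>2 = \<tau>2"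
    using apex_choice_Ap[OF assms(1)] apex_choice_Ap[OF assms(2)] by (metis prod.collapse)+
qed

lemma vertex_val_apex_choice:
  assumes "apex_choice A y \<tau>1 \<tau>2"
  shows "vertex_val n A x y i j =
    PRE (nedge n x y i j) (eedge n x y i j) (sedge n x y i j) (wedge n x y i j) ((i,j) = \<tau>1) ((i,j) = \<tau>2)"
proof (cases "(i,j) \<in> A")
  case False
  then have "(i,j) \<noteq> \<tau>1" "(i,j) \<noteq> \<tau>2"
    using assms by (auto simp: apex_choice_def)
  with False show ?thesis
    by (simp add: vertex_val_def PASS_eq_PRE)
qed (use assms in \<open>auto simp: vertex_val_def apex_choice_def\<close>)

lemma nonzero_vertex_val_rules:
  assumes "apex_choice A y \<tau>1 \<tau>2" "vertex_val n A x y i j \<noteq> 0"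
  shows "eedge n x y i j = wedge n x y i j"
    "sedge n x y i j = ((nedge n x y i j \<noteq> ((i,j) = \<tau>1)) \<noteq> ((i,j) = \<tau>2))"
  using assms by (auto simp: vertex_val_apex_choice PRE_altdef split: if_splits)

text \<open>The north edge of \<open>b\<^sub>i\<^sub>,\<^sub>j\<close> in a nonzero term: the north input of column \<open>j\<close>,
  flipped at each of \<open>\<tau>1\<close>, \<open>\<tau>2\<close> lying higher up in the column.\<close>

definition column_bit :: "nat \<Rightarrow> bool list \<Rightarrow> nat \<times> nat \<Rightarrow> nat \<times> nat \<Rightarrow> nat \<Rightarrow> nat \<Rightarrow> bool" where
  "column_bit n x \<tau>1 \<tau>2 i j =
     ((xN n x ! (j - 1) \<noteq> (snd \<tau>1 = j \<and> fst \<tau>1 < i)) \<noteq> (snd \<tau>2 = j \<and> fst \<tau>2 < i))"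

lemma column_bit_Suc:
  "column_bit n x \<tau>1 \<tau>2 (Suc i) j = ((column_bit n x \<tau>1 \<tau>2 i j \<noteq> ((i,j) = \<tau>1)) \<noteq> ((i,j) = \<tau>2))"
  by (cases \<tau>1; cases \<tau>2) (auto simp: column_bit_def less_Suc_eq)

lemma column_bit_1: "fst \<tau>1 \<ge> 1 \<Longrightarrow> fst \<tau>2 \<ge> 1 \<Longrightarrow> column_bit n x \<tau>1 \<tau>2 1 j = xN n x ! (j - 1)"
  by (simp add: column_bit_def)

lemma wedge_eq_xW_of_nonzero:
  assumes y: "apex_choice A y \<tau>1 \<tau>2"
    and nz: "\<forall>i\<in>{1..n}. \<forall>j\<in>{1..n}. vertex_val n A x y i j \<noteq> 0"
    and i: "i \<in> {1..n}" and j: "1 \<le> j" "j \<le> n"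
  shows "wedge n x y i j = xW n x ! (i - 1)"
  using j
proof (induction j)
  case (Suc j)
  show ?case
  proof (cases "j = 0")
    case False
    then have "wedge n x y i (Suc j) = eedge n x y i j"
      using Suc.prems by (simp add: wedge_def eedge_def)
    also have "\<dots> = wedge n x y i j"
      using nonzero_vertex_val_rules(1)[OF y] nz i Suc.prems False by simp
    finally show ?thesis
      using Suc False by simp
  qed (simp add: wedge_def)
qed simp

lemma nedge_eq_column_bit_of_nonzero:
  assumes hA: "A \<subseteq> {1..n} \<times> {1..n}" and y: "apex_choice A y \<tau>1 \<tau>2"
    and nz: "\<forall>i\<in>{1..n}. \<forall>j\<in>{1..n}. vertex_val n A x y i j \<noteq> 0"
    and j: "j \<in> {1..n}" and i: "1 \<le> i" "i \<le> n"
  shows "nedge n x y i j = column_bit n x \<tau>1 \<tau>2 i j"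
  using i
proof (induction i)
  case (Suc i)
  show ?case
  proof (cases "i = 0")
    case True
    have "fst \<tau>1 \<ge> 1" "fst \<tau>2 \<ge> 1"
      using y hA by (auto simp: apex_choice_def)
    then show ?thesis
      using True column_bit_1[of \<tau>1 \<tau>2 n x j] by (simp add: nedge_def)
  next
    case False
    then have "nedge n x y (Suc i) j = sedge n x y i j"
      using Suc.prems by (simp add: nedge_def sedge_def)
    also have "\<dots> = column_bit n x \<tau>1 \<tau>2 (Suc i) j"
      using nonzero_vertex_val_rules(2)[OF y] nz j Suc False by (simp add: column_bit_Suc)
    finally show ?thesis .
  qed
qed simp

definition canonical_assignment ::
    "nat \<Rightarrow> (nat \<times> nat) set \<Rightarrow> bool list \<Rightarrow> nat \<times> nat \<Rightarrow> nat \<times> nat \<Rightarrow> edge \<Rightarrow> bool" where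
  "canonical_assignment n A x \<tau>1 \<tau>2 e =
     (if e \<in> inner_edges n A then
        case e of
          Vt i j \<Rightarrow> column_bit n x \<tau>1 \<tau>2 (Suc i) j
        | Hz i j \<Rightarrow> xW n x ! (i - 1)
        | Ap1 i j \<Rightarrow> (i,j) = \<tau>1
        | Ap2 i j \<Rightarrow> (i,j) = \<tau>2
      else undefined)"

lemma canonical_assignment_PiE:
  "canonical_assignment n A x \<tau>1 \<tau>2 \<in> Pi\<^sub>E (inner_edges n A) (\<lambda>_. UNIV)"
  by (auto simp: PiE_def extensional_def canonical_assignment_def)

lemma apex_choice_canonical_assignment:
  "\<tau>1 \<in> A \<Longrightarrow> \<tau>2 \<in> A \<Longrightarrow> apex_choice A (canonical_assignment n A x \<tau>1 \<tau>2) \<tau>1 \<tau>2"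
  by (auto simp: apex_choice_def canonical_assignment_def)

lemma inj_on_canonical_assignment:
  "inj_on (\<lambda>(\<tau>1, \<tau>2). canonical_assignment n A x \<tau>1 \<tau>2) (A \<times> A)"
proof (rule inj_onI)
  fix p q
  assume "p \<in> A \<times> A" "q \<in> A \<times> A"
    and eq: "(\<lambda>(\<tau>1, \<tau>2). canonical_assignment n A x \<tau>1 \<tau>2) p = (\<lambda>(\<tau>1, \<tau>2). canonical_assignment n A x \<tau>1 \<tau>2) q"
  moreover obtain \<tau>1 \<tau>2 \<sigma>1 \<sigma>2 where pq: "p = (\<tau>1, \<tau>2)" "q = (\<sigma>1, \<sigma>2)"
    by (cases p; cases q) blast
  ultimately have mem: "\<tau>1 \<in> A" "\<tau>2 \<in> A" "\<sigma>1 \<in> A" "\<sigma>2 \<in> A"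
    and eq': "canonical_assignment n A x \<tau>1 \<tau>2 = canonical_assignment n A x \<sigma>1 \<sigma>2"
    by auto
  have "apex_choice A (canonical_assignment n A x \<tau>1 \<tau>2) \<tau>1 \<tau>2"
    using mem by (intro apex_choice_canonical_assignment)
  moreover have "apex_choice A (canonical_assignment n A x \<tau>1 \<tau>2) \<sigma>1 \<sigma>2"
    unfolding eq' using mem by (intro apex_choice_canonical_assignment)
  ultimately show "p = q"
    using pq apex_choice_unique by metis
qed

lemma eq_canonical_assignment_of_nonzero:
  assumes hA: "A \<subseteq> {1..n} \<times> {1..n}" and y: "y \<in> Pi\<^sub>E (inner_edges n A) (\<lambda>_. UNIV)"
    and ap: "apex_choice A y \<tau>1 \<tau>2"
    and nzv: "\<forall>i\<in>{1..n}. \<forall>j\<in>{1..n}. vertex_val n A x y i j \<noteq> 0"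
  shows "y = canonical_assignment n A x \<tau>1 \<tau>2"
proof
  fix e
  show "y e = canonical_assignment n A x \<tau>1 \<tau>2 e"
  proof (cases "e \<in> inner_edges n A")
    case True
    then show ?thesis
    proof (cases e)
      case (Vt i j)
      then have ij: "i \<in> {1..n}" "j \<in> {1..n}" "i < n"
        using True by auto
      have "y e = sedge n x y i j"
        using Vt ij by (simp add: sedge_def)
      also have "\<dots> = ((nedge n x y i j \<noteq> ((i,j) = \<tau>1)) \<noteq> ((i,j) = \<tau>2))"
        using nonzero_vertex_val_rules(2)[OF ap] nzv ij by blast
      also have "\<dots> = column_bit n x \<tau>1 \<tau>2 (Suc i) j"
        using nedge_eq_column_bit_of_nonzero[OF hA ap nzv, of j i] ij by (simp add: column_bit_Suc)
      finally show ?thesis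
        using True Vt by (simp add: canonical_assignment_def)
    next
      case (Hz i j)
      then have ij: "i \<in> {1..n}" "j \<in> {1..n}" "j < n"
        using True by auto
      have "y e = eedge n x y i j"
        using Hz ij by (simp add: eedge_def)
      also have "\<dots> = wedge n x y i j"
        using nonzero_vertex_val_rules(1)[OF ap] nzv ij by blast
      also have "\<dots> = xW n x ! (i - 1)"
        using wedge_eq_xW_of_nonzero[OF ap nzv, of i j] ij by simp
      finally show ?thesis
        using True Hz by (simp add: canonical_assignment_def)
    qed (use True apex_choice_Ap[OF ap] in \<open>simp_all add: canonical_assignment_def\<close>)
  next
    case False
    then show ?thesis
      using PiE_arb[OF y] by (simp add: canonical_assignment_def)
  qed
qed

lemma nonzero_term_is_canonical:
  assumes hA: "A \<subseteq> {1..n} \<times> {1..n}" and y: "y \<in> Pi\<^sub>E (inner_edges n A) (\<lambda>_. UNIV)"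
    and nz: "(\<Prod>i\<in>{1..n}. \<Prod>j\<in>{1..n}. vertex_val n A x y i j) * apex1_val A y * apex2_val A y \<noteq> 0"
  shows "\<exists>\<tau>1\<in>A. \<exists>\<tau>2\<in>A. y = canonical_assignment n A x \<tau>1 \<tau>2"
proof -
  obtain \<tau>1 \<tau>2 where ap: "apex_choice A y \<tau>1 \<tau>2"
    using nz by (auto elim: apex_choice_of_nonzero)
  moreover have "\<forall>i\<in>{1..n}. \<forall>j\<in>{1..n}. vertex_val n A x y i j \<noteq> 0"
    using nz by auto
  ultimately have "y = canonical_assignment n A x \<tau>1 \<tau>2"
    by (rule eq_canonical_assignment_of_nonzero[OF hA y])
  moreover have "\<tau>1 \<in> A" "\<tau>2 \<in> A"
    using ap by (simp_all add: apex_choice_def)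
  ultimately show ?thesis
    by blast
qed

definition canonical_weight :: "nat \<Rightarrow> (nat \<times> nat) set \<Rightarrow> bool list \<Rightarrow> nat \<times> nat \<Rightarrow> nat \<times> nat \<Rightarrow> int" where
  "canonical_weight n A x \<tau>1 \<tau>2 =
     (\<Prod>i\<in>{1..n}. \<Prod>j\<in>{1..n}. vertex_val n A x (canonical_assignment n A x \<tau>1 \<tau>2) i j)"

theorem SigGamma_eq_sum_canonical_weight:
  assumes hA: "A \<subseteq> {1..n} \<times> {1..n}"
  shows "SigGamma n A x = (\<Sum>\<tau>1\<in>A. \<Sum>\<tau>2\<in>A. canonical_weight n A x \<tau>1 \<tau>2)"
proof -
  let ?P = "Pi\<^sub>E (inner_edges n A) (\<lambda>_. UNIV :: bool set)"
  let ?term = "\<lambda>y. (\<Prod>i\<in>{1..n}. \<Prod>j\<in>{1..n}. vertex_val n A x y i j) * apex1_val A y * apex2_val A y"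
  let ?canon = "\<lambda>(\<tau>1, \<tau>2). canonical_assignment n A x \<tau>1 \<tau>2"
  have "finite A"
    using hA finite_subset by blast
  then have "finite ?P"
    by (intro finite_PiE finite_inner_edges) simp_all
  moreover have "?canon ` (A \<times> A) \<subseteq> ?P"
    by (rule image_subsetI) (simp only: case_prod_beta canonical_assignment_PiE)
  moreover have "\<forall>y\<in>?P - ?canon ` (A \<times> A). ?term y = 0"
    using nonzero_term_is_canonical[OF hA] by blast
  ultimately have "SigGamma n A x = sum ?term (?canon ` (A \<times> A))"
    unfolding SigGamma_def by (simp add: sum.mono_neutral_right)
  also have "\<dots> = (\<Sum>p\<in>A \<times> A. ?term (?canon p))"
    by (rule sum.reindex[OF inj_on_canonical_assignment, unfolded comp_def])
  also have "\<dots> = (\<Sum>(\<tau>1, \<tau>2)\<in>A \<times> A. canonical_weight n A x \<tau>1 \<tau>2)"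
  proof (rule sum.cong[OF refl])
    fix p
    assume "p \<in> A \<times> A"
    then obtain \<tau>1 \<tau>2 where p: "p = (\<tau>1, \<tau>2)" and "\<tau>1 \<in> A" "\<tau>2 \<in> A"
      by blast
    then have "apex_choice A (canonical_assignment n A x \<tau>1 \<tau>2) \<tau>1 \<tau>2"
      by (intro apex_choice_canonical_assignment)
    then show "?term (?canon p) = (\<lambda>(\<tau>1, \<tau>2). canonical_weight n A x \<tau>1 \<tau>2) p"
      by (simp add: p canonical_weight_def apex_vals_apex_choice)
  qed
  finally show ?thesis
    by (simp only: sum.cartesian_product)
qed

section \<open>Consistency with the east and south boundary\<close>

lemma canonical_assignment_edges:
  assumes hA: "A \<subseteq> {1..n} \<times> {1..n}" and \<tau>: "\<tau>1 \<in> A" "\<tau>2 \<in> A"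
    and ij: "i \<in> {1..n}" "j \<in> {1..n}"
  shows "nedge n x (canonical_assignment n A x \<tau>1 \<tau>2) i j = column_bit n x \<tau>1 \<tau>2 i j"
    and "sedge n x (canonical_assignment n A x \<tau>1 \<tau>2) i j =
      (if i = n then xS n x ! (j - 1) else column_bit n x \<tau>1 \<tau>2 (Suc i) j)"
    and "wedge n x (canonical_assignment n A x \<tau>1 \<tau>2) i j = xW n x ! (i - 1)"
    and "eedge n x (canonical_assignment n A x \<tau>1 \<tau>2) i j =
      (if j = n then xE n x ! (i - 1) else xW n x ! (i - 1))"
proof -
  have "fst \<tau>1 \<ge> 1" "fst \<tau>2 \<ge> 1"
    using \<tau> hA by auto
  then show "nedge n x (canonical_assignment n A x \<tau>1 \<tau>2) i j = column_bit n x \<tau>1 \<tau>2 i j"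
    using ij column_bit_1[of \<tau>1 \<tau>2 n x j] by (auto simp: nedge_def canonical_assignment_def)
qed (use ij in \<open>auto simp: sedge_def wedge_def eedge_def canonical_assignment_def\<close>)

lemma vertex_val_canonical_assignment:
  assumes "A \<subseteq> {1..n} \<times> {1..n}" "\<tau>1 \<in> A" "\<tau>2 \<in> A" "i \<in> {1..n}" "j \<in> {1..n}"
  shows "vertex_val n A x (canonical_assignment n A x \<tau>1 \<tau>2) i j =
    PRE (column_bit n x \<tau>1 \<tau>2 i j) (if j = n then xE n x ! (i - 1) else xW n x ! (i - 1))
      (if i = n then xS n x ! (j - 1) else column_bit n x \<tau>1 \<tau>2 (Suc i) j) (xW n x ! (i - 1))
      ((i,j) = \<tau>1) ((i,j) = \<tau>2)"
proof -
  have ap: "apex_choice A (canonical_assignment n A x \<tau>1 \<tau>2) \<tau>1 \<tau>2"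
    using assms by (intro apex_choice_canonical_assignment)
  show ?thesis
    unfolding vertex_val_apex_choice[OF ap] canonical_assignment_edges[OF assms] ..
qed

definition vertex_consistent :: "nat \<Rightarrow> bool list \<Rightarrow> nat \<times> nat \<Rightarrow> nat \<times> nat \<Rightarrow> nat \<Rightarrow> nat \<Rightarrow> bool" where
  "vertex_consistent n x \<tau>1 \<tau>2 i j \<longleftrightarrow>
     (j = n \<longrightarrow> xE n x ! (i - 1) = xW n x ! (i - 1)) \<and>
     (i = n \<longrightarrow> xS n x ! (j - 1) = column_bit n x \<tau>1 \<tau>2 (Suc n) j) \<and>
     ((i,j) = \<tau>1 \<or> (i,j) = \<tau>2 \<longrightarrow> column_bit n x \<tau>1 \<tau>2 i j = ((i,j) = \<tau>2))"

text \<open>Among the nonzero values of \<open>PASS\<close> only \<open>PASS(1111) = -1\<close> is not \<open>1\<close>: a sign at each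
  crossing of an active row with an active column away from \<open>\<tau>1\<close>, \<open>\<tau>2\<close>.\<close>

definition crossing_sign :: "nat \<Rightarrow> bool list \<Rightarrow> nat \<times> nat \<Rightarrow> nat \<times> nat \<Rightarrow> nat \<Rightarrow> nat \<Rightarrow> int" where
  "crossing_sign n x \<tau>1 \<tau>2 i j =
     (if xW n x ! (i - 1) \<and> column_bit n x \<tau>1 \<tau>2 i j \<and> (i,j) \<noteq> \<tau>1 \<and> (i,j) \<noteq> \<tau>2 then -1 else 1)"

lemma vertex_val_canonical_assignment_eq:
  assumes "A \<subseteq> {1..n} \<times> {1..n}" "\<tau>1 \<in> A" "\<tau>2 \<in> A" "i \<in> {1..n}" "j \<in> {1..n}"
  shows "vertex_val n A x (canonical_assignment n A x \<tau>1 \<tau>2) i j =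
    (if vertex_consistent n x \<tau>1 \<tau>2 i j then crossing_sign n x \<tau>1 \<tau>2 i j else 0)"
  unfolding vertex_val_canonical_assignment[OF assms] PRE_altdef column_bit_Suc[symmetric]
  by (auto simp: vertex_consistent_def crossing_sign_def)

definition consistent :: "nat \<Rightarrow> bool list \<Rightarrow> nat \<times> nat \<Rightarrow> nat \<times> nat \<Rightarrow> bool" where
  "consistent n x \<tau>1 \<tau>2 \<longleftrightarrow>
     (\<forall>i\<in>{1..n}. xE n x ! (i - 1) = xW n x ! (i - 1)) \<and>
     (\<forall>j\<in>{1..n}. xS n x ! (j - 1) = column_bit n x \<tau>1 \<tau>2 (Suc n) j) \<and>
     (\<tau>1 \<noteq> \<tau>2 \<longrightarrow> \<not> column_bit n x \<tau>1 \<tau>2 (fst \<tau>1) (snd \<tau>1) \<and> column_bit n x \<tau>1 \<tau>2 (fst \<tau>2) (snd \<tau>2)) \<and>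
     (\<tau>1 = \<tau>2 \<longrightarrow> column_bit n x \<tau>1 \<tau>2 (fst \<tau>1) (snd \<tau>1))"

lemma consistent_iff_vertex_consistent:
  assumes "\<tau>1 \<in> {1..n} \<times> {1..n}" "\<tau>2 \<in> {1..n} \<times> {1..n}"
  shows "consistent n x \<tau>1 \<tau>2 \<longleftrightarrow> (\<forall>i\<in>{1..n}. \<forall>j\<in>{1..n}. vertex_consistent n x \<tau>1 \<tau>2 i j)"
proof
  assume "consistent n x \<tau>1 \<tau>2"
  then show "\<forall>i\<in>{1..n}. \<forall>j\<in>{1..n}. vertex_consistent n x \<tau>1 \<tau>2 i j"
    by (auto simp: consistent_def vertex_consistent_def)
next
  assume all: "\<forall>i\<in>{1..n}. \<forall>j\<in>{1..n}. vertex_consistent n x \<tau>1 \<tau>2 i j"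
  have "n \<in> {1..n}"
    using assms by auto
  then have "\<forall>i\<in>{1..n}. xE n x ! (i - 1) = xW n x ! (i - 1)"
    "\<forall>j\<in>{1..n}. xS n x ! (j - 1) = column_bit n x \<tau>1 \<tau>2 (Suc n) j"
    using all unfolding vertex_consistent_def by blast+
  moreover have "vertex_consistent n x \<tau>1 \<tau>2 (fst \<tau>1) (snd \<tau>1)" "vertex_consistent n x \<tau>1 \<tau>2 (fst \<tau>2) (snd \<tau>2)"
    using all assms by auto
  ultimately show "consistent n x \<tau>1 \<tau>2"
    by (auto simp: consistent_def vertex_consistent_def)
qed

lemma canonical_weight_eq:
  assumes hA: "A \<subseteq> {1..n} \<times> {1..n}" and \<tau>: "\<tau>1 \<in> A" "\<tau>2 \<in> A"
  shows "canonical_weight n A x \<tau>1 \<tau>2 =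
    (if consistent n x \<tau>1 \<tau>2 then \<Prod>i\<in>{1..n}. \<Prod>j\<in>{1..n}. crossing_sign n x \<tau>1 \<tau>2 i j else 0)"
proof -
  have "canonical_weight n A x \<tau>1 \<tau>2 =
      (\<Prod>i\<in>{1..n}. \<Prod>j\<in>{1..n}. if vertex_consistent n x \<tau>1 \<tau>2 i j then crossing_sign n x \<tau>1 \<tau>2 i j else 0)"
    unfolding canonical_weight_def
    by (intro prod.cong refl) (simp add: vertex_val_canonical_assignment_eq[OF hA \<tau>])
  moreover have "consistent n x \<tau>1 \<tau>2 \<longleftrightarrow> (\<forall>i\<in>{1..n}. \<forall>j\<in>{1..n}. vertex_consistent n x \<tau>1 \<tau>2 i j)"
    using \<tau> hA by (intro consistent_iff_vertex_consistent) auto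
  ultimately show ?thesis
    by (auto simp: prod_zero_iff intro!: prod.cong)
qed

section \<open>Unit-vector boundaries\<close>

definition one_hot :: "nat \<Rightarrow> bool list \<Rightarrow> nat \<Rightarrow> bool" where
  "one_hot n l k \<longleftrightarrow> (\<forall>j\<in>{1..n}. l ! (j - 1) = (j = k))"

lemma hw_eq_card: "hw l = card {i. i < length l \<and> l ! i}"
  by (simp add: hw_def length_filter_conv_card)

lemma one_hot_onepos:
  assumes "length l = n" "hw l = 1"
  shows "onepos l \<in> {1..n}" "one_hot n l (onepos l)"
proof -
  have "card {i. i < n \<and> l ! i} = 1"
    using assms by (simp add: hw_eq_card)
  then obtain k where k: "{i. i < n \<and> l ! i} = {k}"
    by (rule card_1_singletonE)
  have "(LEAST i. i < length l \<and> l ! i) = k"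
    using k assms(1) by (metis (mono_tags) Least_equality insertI1 mem_Collect_eq order_refl singletonD)
  then have onepos: "onepos l = Suc k"
    by (simp add: onepos_def)
  have "k < n"
    using k by blast
  then show "onepos l \<in> {1..n}"
    using onepos by simp
  have "l ! (j - 1) = (j = onepos l)" if "j \<in> {1..n}" for j
  proof -
    have "l ! (j - 1) \<longleftrightarrow> j - 1 \<in> {i. i < n \<and> l ! i}"
      using that by auto
    also have "\<dots> \<longleftrightarrow> j - 1 = k"
      unfolding k by simp
    also have "\<dots> \<longleftrightarrow> j = onepos l"
      using onepos that by auto
    finally show ?thesis .
  qed
  then show "one_hot n l (onepos l)"
    by (simp add: one_hot_def)
qed

lemma hw_one_hot:
  assumes "length l = n" "k \<in> {1..n}" "one_hot n l k"
  shows "hw l = 1"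
proof -
  have "l ! i \<longleftrightarrow> i = k - 1" if "i < n" for i
  proof -
    have "Suc i \<in> {1..n}"
      using that by simp
    then have "l ! (Suc i - 1) = (Suc i = k)"
      using assms(3) unfolding one_hot_def by blast
    then show ?thesis
      using assms(2) by auto
  qed
  then have "{i. i < length l \<and> l ! i} = {k - 1}"
    using assms by auto
  then show ?thesis
    by (simp add: hw_eq_card)
qed

lemma list_eq_one_based_nthI:
  assumes "length l = n" "length l' = n" "\<forall>j\<in>{1..n}. l ! (j - 1) = l' ! (j - 1)"
  shows "l = l'"
proof (rule nth_equalityI)
  fix i
  assume "i < length l"
  then have "Suc i \<in> {1..n}"
    using assms(1) by simp
  then have "l ! (Suc i - 1) = l' ! (Suc i - 1)"
    using assms(3) by blast
  then show "l ! i = l' ! i"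
    by simp
qed (use assms in simp)

lemma column_bit_one_hot:
  assumes "one_hot n (xN n x) v" "j \<in> {1..n}"
  shows "column_bit n x (a,b) (c,d) i j = (((j = v) \<noteq> (b = j \<and> a < i)) \<noteq> (d = j \<and> c < i))"
  using assms by (simp add: one_hot_def column_bit_def)

lemma prod_crossing_sign_one_hot_row:
  assumes "u \<in> {1..n}" "one_hot n (xW n x) u"
  shows "(\<Prod>i\<in>{1..n}. \<Prod>j\<in>{1..n}. crossing_sign n x \<tau>1 \<tau>2 i j) = (\<Prod>j\<in>{1..n}. crossing_sign n x \<tau>1 \<tau>2 u j)"
proof -
  have "(\<Prod>i\<in>{1..n}. \<Prod>j\<in>{1..n}. crossing_sign n x \<tau>1 \<tau>2 i j) = (\<Prod>i\<in>{u}. \<Prod>j\<in>{1..n}. crossing_sign n x \<tau>1 \<tau>2 i j)"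
    using assms by (intro prod.mono_neutral_right) (auto simp: one_hot_def crossing_sign_def)
  then show ?thesis
    by simp
qed

lemma column_bit_bottom_one_hot:
  assumes "one_hot n (xN n x) v" "j \<in> {1..n}" "a \<le> n" "c \<le> n"
  shows "column_bit n x (a,b) (c,d) (Suc n) j = (((j = v) \<noteq> (b = j)) \<noteq> (d = j))"
  using assms by (simp add: column_bit_one_hot)

lemma consistent_bottom_one_hot:
  assumes "one_hot n (xN n x) v" "v \<in> {1..n}" "a \<in> {1..n}" "b \<in> {1..n}" "c \<in> {1..n}" "d \<in> {1..n}"
    and "consistent n x (a,b) (c,d)"
  obtains w where "w \<in> {1..n}" "\<forall>j\<in>{1..n}. column_bit n x (a,b) (c,d) (Suc n) j = (j = w)"
proof (cases "b = d")
  case True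
  then show ?thesis
    using assms by (intro that[of v]) (auto simp: column_bit_one_hot)
next
  case False
  then have "\<not> column_bit n x (a,b) (c,d) a b" "column_bit n x (a,b) (c,d) c d"
    using assms(7) by (auto simp: consistent_def)
  then have "b \<noteq> v" "d = v"
    using assms False by (auto simp: column_bit_one_hot)
  then show ?thesis
    using assms False by (intro that[of b]) (auto simp: column_bit_one_hot)
qed

lemma consistent_turn_iff:
  assumes hN: "one_hot n (xN n x) v" and hW: "one_hot n (xW n x) u"
    and hE: "one_hot n (xE n x) u" and hS: "one_hot n (xS n x) w"
    and vw: "v \<in> {1..n}" "w \<in> {1..n}" "v \<noteq> w"
    and g: "a \<in> {1..n}" "b \<in> {1..n}" "c \<in> {1..n}" "d \<in> {1..n}"
  shows "consistent n x (a,b) (c,d) \<longleftrightarrow> b = w \<and> d = v"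
proof
  assume cons: "consistent n x (a,b) (c,d)"
  have bottom: "xS n x ! (j - 1) = (((j = v) \<noteq> (b = j)) \<noteq> (d = j))" if "j \<in> {1..n}" for j
    using cons that g column_bit_bottom_one_hot[OF hN that] by (simp add: consistent_def)
  have "xS n x ! (w - 1)" "\<not> xS n x ! (v - 1)"
    using hS vw unfolding one_hot_def by auto
  then have "(b = w) \<noteq> (d = w)" "(b = v) \<noteq> (d = v)"
    using bottom[of w] bottom[of v] vw by auto
  moreover have "(a,b) \<noteq> (c,d) \<longrightarrow> \<not> column_bit n x (a,b) (c,d) a b"
    using cons by (simp add: consistent_def)
  ultimately show "b = w \<and> d = v"
    using vw g column_bit_one_hot[OF hN, of b a b c d a] by auto
next
  assume bd: "b = w \<and> d = v"
  have "\<forall>i\<in>{1..n}. xE n x ! (i - 1) = xW n x ! (i - 1)"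
    using hE hW by (simp add: one_hot_def)
  moreover have "\<forall>j\<in>{1..n}. xS n x ! (j - 1) = column_bit n x (a,b) (c,d) (Suc n) j"
    using bd hS vw g by (auto simp: one_hot_def column_bit_bottom_one_hot[OF hN])
  moreover have "\<not> column_bit n x (a,b) (c,d) a b" "column_bit n x (a,b) (c,d) c d"
    using bd vw g by (simp_all add: column_bit_one_hot[OF hN])
  moreover have "(a,b) \<noteq> (c,d)"
    using bd vw by auto
  ultimately show "consistent n x (a,b) (c,d)"
    unfolding consistent_def fst_conv snd_conv by blast
qed

lemma canonical_weight_turn:
  assumes hA: "A \<subseteq> {1..n} \<times> {1..n}" and \<tau>: "\<tau>1 \<in> A" "\<tau>2 \<in> A"
    and hN: "one_hot n (xN n x) v" and hW: "one_hot n (xW n x) u"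
    and hE: "one_hot n (xE n x) u" and hS: "one_hot n (xS n x) w"
    and uvw: "u \<in> {1..n}" "v \<in> {1..n}" "w \<in> {1..n}" "v \<noteq> w"
  shows "canonical_weight n A x \<tau>1 \<tau>2 =
    (if snd \<tau>1 = w then if fst \<tau>1 < u then -1 else 1 else 0) *
    (if snd \<tau>2 = v then if u < fst \<tau>2 then -1 else 1 else 0)"
proof -
  obtain a b c d where \<tau>12: "\<tau>1 = (a,b)" "\<tau>2 = (c,d)"
    by (cases \<tau>1; cases \<tau>2) blast
  have g: "a \<in> {1..n}" "b \<in> {1..n}" "c \<in> {1..n}" "d \<in> {1..n}"
    using hA \<tau> \<tau>12 by auto
  have cons: "consistent n x \<tau>1 \<tau>2 \<longleftrightarrow> b = w \<and> d = v"
    unfolding \<tau>12 by (rule consistent_turn_iff[OF hN hW hE hS uvw(2-4) g])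
  show ?thesis
  proof (cases "b = w \<and> d = v")
    case True
    have row_u: "crossing_sign n x \<tau>1 \<tau>2 u j =
        (if ((j = v) \<noteq> (w = j \<and> a < u)) \<noteq> (v = j \<and> c < u) \<and> (u,j) \<noteq> (a,w) \<and> (u,j) \<noteq> (c,v)
         then -1 else 1)" if "j \<in> {1..n}" for j
      using hW uvw(1) True that
      by (simp add: \<tau>12 crossing_sign_def column_bit_one_hot[OF hN] one_hot_def)
    have "canonical_weight n A x \<tau>1 \<tau>2 = (\<Prod>i\<in>{1..n}. \<Prod>j\<in>{1..n}. crossing_sign n x \<tau>1 \<tau>2 i j)"
      using canonical_weight_eq[OF hA \<tau>] cons True by simp
    also have "\<dots> = (\<Prod>j\<in>{1..n}. crossing_sign n x \<tau>1 \<tau>2 u j)"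
      by (rule prod_crossing_sign_one_hot_row[OF uvw(1) hW])
    also have "\<dots> = (\<Prod>j\<in>{v,w}. crossing_sign n x \<tau>1 \<tau>2 u j)"
      using uvw row_u by (intro prod.mono_neutral_right) auto
    also have "\<dots> = crossing_sign n x \<tau>1 \<tau>2 u v * crossing_sign n x \<tau>1 \<tau>2 u w"
      using uvw by simp
    also have "\<dots> = (if u < c then -1 else 1) * (if a < u then -1 else 1)"
      using uvw row_u by auto
    finally show ?thesis
      using True \<tau>12 by simp
  next
    case False
    then show ?thesis
      using canonical_weight_eq[OF hA \<tau>] cons \<tau>12 by auto
  qed
qed

lemma consistent_straight_iff:
  assumes hN: "one_hot n (xN n x) v" and hW: "one_hot n (xW n x) u"
    and hE: "one_hot n (xE n x) u" and hS: "one_hot n (xS n x) v" and v: "v \<in> {1..n}"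
    and g: "a \<in> {1..n}" "b \<in> {1..n}" "c \<in> {1..n}" "d \<in> {1..n}"
  shows "consistent n x (a,b) (c,d) \<longleftrightarrow>
    b = d \<and> (if a = c then b = v else if b = v then c < a else a < c)"
proof
  assume cons: "consistent n x (a,b) (c,d)"
  have "xS n x ! (b - 1) = (((b = v) \<noteq> (b = b)) \<noteq> (d = b))"
    using cons g column_bit_bottom_one_hot[OF hN g(2)] by (simp add: consistent_def)
  then have bd: "b = d"
    using hS g by (auto simp: one_hot_def)
  have "(a,b) \<noteq> (c,d) \<longrightarrow> \<not> column_bit n x (a,b) (c,d) a b \<and> column_bit n x (a,b) (c,d) c d"
    "(a,b) = (c,d) \<longrightarrow> column_bit n x (a,b) (c,d) a b"
    using cons by (simp_all add: consistent_def)
  then show "b = d \<and> (if a = c then b = v else if b = v then c < a else a < c)"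
    using bd g column_bit_one_hot[OF hN g(2), of a b c d a] column_bit_one_hot[OF hN g(4), of a b c d c]
    by (auto split: if_splits)
next
  assume bd: "b = d \<and> (if a = c then b = v else if b = v then c < a else a < c)"
  have "\<forall>i\<in>{1..n}. xE n x ! (i - 1) = xW n x ! (i - 1)"
    using hE hW by (simp add: one_hot_def)
  moreover have "\<forall>j\<in>{1..n}. xS n x ! (j - 1) = column_bit n x (a,b) (c,d) (Suc n) j"
    using bd hS g by (auto simp: one_hot_def column_bit_bottom_one_hot[OF hN])
  moreover have "(a,b) \<noteq> (c,d) \<longrightarrow> \<not> column_bit n x (a,b) (c,d) a b \<and> column_bit n x (a,b) (c,d) c d"
    "(a,b) = (c,d) \<longrightarrow> column_bit n x (a,b) (c,d) a b"
    using bd g column_bit_one_hot[OF hN g(2), of a b c d a] column_bit_one_hot[OF hN g(4), of a b c d c]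
    by (auto split: if_splits)
  ultimately show "consistent n x (a,b) (c,d)"
    unfolding consistent_def fst_conv snd_conv by blast
qed

text \<open>The weight of \<open>\<tau>1 = (a,j)\<close>, \<open>\<tau>2 = (c,j)\<close> in the straight case, when row \<open>u\<close> and
  column \<open>v\<close> carry the signal.\<close>

definition straight_weight :: "nat \<Rightarrow> nat \<Rightarrow> nat \<Rightarrow> nat \<Rightarrow> nat \<Rightarrow> int" where
  "straight_weight u v j a c =
     (if j = v then
        if a = c then if a = u then 1 else -1
        else if c < a then if c \<le> u \<and> u \<le> a then 1 else -1
        else 0
      else if a < c then if a < u \<and> u < c then 1 else -1
      else 0)"

lemma canonical_weight_straight:
  assumes hA: "A \<subseteq> {1..n} \<times> {1..n}" and \<tau>: "\<tau>1 \<in> A" "\<tau>2 \<in> A"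
    and hN: "one_hot n (xN n x) v" and hW: "one_hot n (xW n x) u"
    and hE: "one_hot n (xE n x) u" and hS: "one_hot n (xS n x) v"
    and uv: "u \<in> {1..n}" "v \<in> {1..n}"
  shows "canonical_weight n A x \<tau>1 \<tau>2 =
    (if snd \<tau>1 = snd \<tau>2 then straight_weight u v (snd \<tau>1) (fst \<tau>1) (fst \<tau>2) else 0)"
proof -
  obtain a b c d where \<tau>12: "\<tau>1 = (a,b)" "\<tau>2 = (c,d)"
    by (cases \<tau>1; cases \<tau>2) blast
  have g: "a \<in> {1..n}" "b \<in> {1..n}" "c \<in> {1..n}" "d \<in> {1..n}"
    using hA \<tau> \<tau>12 by auto
  have cons: "consistent n x \<tau>1 \<tau>2 \<longleftrightarrow>
      b = d \<and> (if a = c then b = v else if b = v then c < a else a < c)"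
    unfolding \<tau>12 by (rule consistent_straight_iff[OF hN hW hE hS uv(2) g])
  show ?thesis
  proof (cases "consistent n x \<tau>1 \<tau>2")
    case True
    then have bd: "d = b"
      using cons by simp
    have row_u: "crossing_sign n x \<tau>1 \<tau>2 u j =
        (if ((j = v) \<noteq> (b = j \<and> a < u)) \<noteq> (b = j \<and> c < u) \<and> (u,j) \<noteq> (a,b) \<and> (u,j) \<noteq> (c,b)
         then -1 else 1)" if "j \<in> {1..n}" for j
      using hW uv(1) that
      by (simp add: \<tau>12 bd crossing_sign_def column_bit_one_hot[OF hN] one_hot_def)
    have "canonical_weight n A x \<tau>1 \<tau>2 = (\<Prod>j\<in>{1..n}. crossing_sign n x \<tau>1 \<tau>2 u j)"
      using canonical_weight_eq[OF hA \<tau>] True prod_crossing_sign_one_hot_row[OF uv(1) hW] by simp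
    also have "\<dots> = (\<Prod>j\<in>{v,b}. crossing_sign n x \<tau>1 \<tau>2 u j)"
      using uv g row_u by (intro prod.mono_neutral_right) auto
    also have "\<dots> = straight_weight u v b a c"
    proof (cases "b = v")
      case True
      then have "a = c \<or> c < a"
        using cons \<open>consistent n x \<tau>1 \<tau>2\<close> by (auto split: if_splits)
      then show ?thesis
        using True uv row_u by (auto simp: straight_weight_def)
    next
      case False
      then have "a < c"
        using cons \<open>consistent n x \<tau>1 \<tau>2\<close> by (auto split: if_splits)
      then show ?thesis
        using False uv g row_u by (auto simp: straight_weight_def)
    qed
    finally show ?thesis
      using \<tau>12 bd by simp
  next
    case False
    then show ?thesis
      using canonical_weight_eq[OF hA \<tau>] cons \<tau>12 by (auto simp: straight_weight_def split: if_splits)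
  qed
qed

section \<open>Summation over columns\<close>

lemma sum_straight_weight_off_column:
  fixes C :: "nat set" and u :: nat
  assumes "finite C" "j \<noteq> v"
  defines "\<alpha> \<equiv> int (card {k\<in>C. k < u})" and "\<beta> \<equiv> int (card {k\<in>C. u < k})" and "m \<equiv> of_bool (u \<in> C) :: int"
  shows "(\<Sum>a\<in>C. \<Sum>c\<in>C. straight_weight u v j a c) =
    \<alpha> * \<beta> - int (nat \<alpha> choose 2) - int (nat \<beta> choose 2) - m * (\<alpha> + \<beta>)"
proof -
  let ?P = "\<Sum>a\<in>C. \<Sum>c\<in>C. of_bool (a < c) :: int"
  have "straight_weight u v j a c = 2 * (of_bool (a < u) * of_bool (u < c)) - of_bool (a < c)" for a c
    using assms(2) by (auto simp: straight_weight_def)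
  then have "(\<Sum>a\<in>C. \<Sum>c\<in>C. straight_weight u v j a c) =
      2 * (\<Sum>a\<in>C. \<Sum>c\<in>C. of_bool (a < u) * of_bool (u < c)) - ?P"
    by (simp add: sum_subtractf sum_distrib_left del: sum_mult_of_bool_eq sum_of_bool_mult_eq)
  also have "\<dots> = 2 * (\<alpha> * \<beta>) - ?P"
    using sum_of_bool_pivot[OF assms(1), of u] by (simp only: sum_product[symmetric] \<alpha>_def \<beta>_def)
  finally have lhs: "(\<Sum>a\<in>C. \<Sum>c\<in>C. straight_weight u v j a c) = 2 * (\<alpha> * \<beta>) - ?P" .
  have "2 * ?P = (\<alpha> + \<beta> + m) * (\<alpha> + \<beta> + m) - (\<alpha> + \<beta> + m)"
    using sum_of_bool_less_pairs[OF assms(1)] sum_of_bool_pivot(6)[OF assms(1), of u] by (simp add: \<alpha>_def \<beta>_def m_def)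
  moreover have "int (nat \<alpha> choose 2) * 2 = \<alpha> * (\<alpha> - 1)" "int (nat \<beta> choose 2) * 2 = \<beta> * (\<beta> - 1)"
    by (simp_all add: \<alpha>_def \<beta>_def choose_two_int)
  moreover have "m * m = m"
    by (simp add: m_def)
  ultimately show ?thesis
    unfolding lhs by algebra
qed

lemma sum_straight_weight_on_column:
  fixes C :: "nat set" and u :: nat
  assumes "finite C"
  defines "\<alpha> \<equiv> int (card {k\<in>C. k < u})" and "\<beta> \<equiv> int (card {k\<in>C. u < k})" and "m \<equiv> of_bool (u \<in> C) :: int"
  shows "(\<Sum>a\<in>C. \<Sum>c\<in>C. straight_weight u v v a c) =
    \<alpha> * \<beta> - int (nat \<alpha> choose 2) - int (nat \<beta> choose 2) + m * (\<alpha> + \<beta>) + m - \<alpha> - \<beta>"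
proof -
  let ?P = "\<Sum>a\<in>C. \<Sum>c\<in>C. of_bool (a < c) :: int"
  let ?N = "int (card C)"
  have "straight_weight u v v a c =
      2 * (of_bool (u \<le> a) * of_bool (c \<le> u)) - 2 * (of_bool (a = u) * of_bool (c = u))
      + 2 * (of_bool (a = c) * of_bool (a = u)) - of_bool (a = c) - of_bool (c < a)" for a c
    by (auto simp: straight_weight_def)
  then have "(\<Sum>a\<in>C. \<Sum>c\<in>C. straight_weight u v v a c) =
      2 * (\<Sum>a\<in>C. \<Sum>c\<in>C. of_bool (u \<le> a) * of_bool (c \<le> u))
      - 2 * (\<Sum>a\<in>C. \<Sum>c\<in>C. of_bool (a = u) * of_bool (c = u))
      + 2 * (\<Sum>a\<in>C. \<Sum>c\<in>C. of_bool (a = c) * of_bool (a = u))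
      - (\<Sum>a\<in>C. \<Sum>c\<in>C. of_bool (a = c)) - (\<Sum>a\<in>C. \<Sum>c\<in>C. of_bool (c < a))"
    by (simp add: sum.distrib sum_subtractf sum_distrib_left
        del: sum_mult_of_bool_eq sum_of_bool_mult_eq sum_of_bool_eq)
  also have "(\<Sum>a\<in>C. \<Sum>c\<in>C. of_bool (a = c) * of_bool (a = u)) = (\<Sum>a\<in>C. of_bool (a = u) :: int)"
    using assms(1) by (intro sum.cong refl) (simp add: sum.delta)
  also have "(\<Sum>a\<in>C. \<Sum>c\<in>C. of_bool (a = c)) = ?N"
    using assms(1) by (simp add: sum.delta)
  also have "(\<Sum>a\<in>C. \<Sum>c\<in>C. of_bool (c < a)) = ?P"
    by (rule sum.swap)
  also have "2 * (\<Sum>a\<in>C. \<Sum>c\<in>C. of_bool (u \<le> a) * of_bool (c \<le> u)) - 2 * (\<Sum>a\<in>C. \<Sum>c\<in>C. of_bool (a = u) * of_bool (c = u))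
      + 2 * (\<Sum>a\<in>C. of_bool (a = u)) = 2 * ((\<beta> + m) * (\<alpha> + m)) - 2 * (m * m) + 2 * m"
    using sum_of_bool_pivot[OF assms(1), of u] by (simp only: sum_product[symmetric] \<alpha>_def \<beta>_def m_def)
  finally have lhs: "(\<Sum>a\<in>C. \<Sum>c\<in>C. straight_weight u v v a c) =
      2 * ((\<beta> + m) * (\<alpha> + m)) - 2 * (m * m) + 2 * m - ?N - ?P" .
  have "2 * ?P = ?N * ?N - ?N" "?N = \<alpha> + \<beta> + m"
    using sum_of_bool_less_pairs[OF assms(1)] sum_of_bool_pivot(6)[OF assms(1), of u]
    by (simp_all add: \<alpha>_def \<beta>_def m_def)
  moreover have "int (nat \<alpha> choose 2) * 2 = \<alpha> * (\<alpha> - 1)" "int (nat \<beta> choose 2) * 2 = \<beta> * (\<beta> - 1)"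
    by (simp_all add: \<alpha>_def \<beta>_def choose_two_int)
  moreover have "m * m = m"
    by (simp add: m_def)
  ultimately show ?thesis
    unfolding lhs by algebra
qed

definition column_entries :: "nat \<Rightarrow> (nat \<times> nat) set \<Rightarrow> nat \<Rightarrow> nat set" where
  "column_entries n A j = {k\<in>{1..n}. (k,j) \<in> A}"

lemma finite_column_entries [simp]: "finite (column_entries n A j)"
  by (simp add: column_entries_def)

lemma column_entries_counts:
  assumes "u \<in> {1..n}"
  shows "alpha n A u j = int (card {k\<in>column_entries n A j. k < u})"
    and "beta n A u j = int (card {k\<in>column_entries n A j. u < k})"
    and "u \<in> column_entries n A j \<longleftrightarrow> (u,j) \<in> A"
proof -
  have "{k\<in>column_entries n A j. k < u} = {k\<in>{1..<u}. (k,j) \<in> A}"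
    "{k\<in>column_entries n A j. u < k} = {k\<in>{u<..n}. (k,j) \<in> A}"
    using assms by (auto simp: column_entries_def)
  then show "alpha n A u j = int (card {k\<in>column_entries n A j. k < u})"
    "beta n A u j = int (card {k\<in>column_entries n A j. u < k})"
    by (simp_all add: alpha_def beta_def)
  show "u \<in> column_entries n A j \<longleftrightarrow> (u,j) \<in> A"
    using assms by (simp add: column_entries_def)
qed

lemma sum_column_entries:
  assumes "A \<subseteq> {1..n} \<times> {1..n}"
  shows "(\<Sum>t\<in>A. if snd t = j then f t else 0) = (\<Sum>k\<in>column_entries n A j. f (k,j))"
proof -
  have "finite A"
    using assms finite_subset by blast
  then have "(\<Sum>t\<in>A. if snd t = j then f t else 0) = (\<Sum>t\<in>{t\<in>A. snd t = j}. f t)"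
    by (simp add: sum.inter_filter)
  also have "{t\<in>A. snd t = j} = (\<lambda>k. (k,j)) ` column_entries n A j"
    using assms by (auto simp: column_entries_def image_iff)
  also have "sum f \<dots> = (\<Sum>k\<in>column_entries n A j. f (k,j))"
    by (subst sum.reindex) (auto simp: inj_on_def)
  finally show ?thesis .
qed

lemma sum_by_columns:
  assumes "A \<subseteq> {1..n} \<times> {1..n}"
  shows "(\<Sum>t\<in>A. f t) = (\<Sum>j\<in>{1..n}. \<Sum>k\<in>column_entries n A j. f (k,j))"
proof -
  have "(\<Sum>t\<in>A. f t) = (\<Sum>t\<in>A. \<Sum>j\<in>{1..n}. if snd t = j then f t else 0)"
    using assms by (intro sum.cong refl) (auto simp: sum.delta)
  also have "\<dots> = (\<Sum>j\<in>{1..n}. \<Sum>t\<in>A. if snd t = j then f t else 0)"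
    by (rule sum.swap)
  also have "\<dots> = (\<Sum>j\<in>{1..n}. \<Sum>k\<in>column_entries n A j. f (k,j))"
    by (intro sum.cong refl sum_column_entries[OF assms])
  finally show ?thesis .
qed

lemma SigGamma_turn:
  assumes hA: "A \<subseteq> {1..n} \<times> {1..n}"
    and hN: "one_hot n (xN n x) v" and hW: "one_hot n (xW n x) u"
    and hE: "one_hot n (xE n x) u" and hS: "one_hot n (xS n x) w"
    and uvw: "u \<in> {1..n}" "v \<in> {1..n}" "w \<in> {1..n}" "v \<noteq> w"
  shows "SigGamma n A x =
    (beta n A u w + of_bool ((u,w) \<in> A) - alpha n A u w) * (alpha n A u v + of_bool ((u,v) \<in> A) - beta n A u v)"
proof -
  have "SigGamma n A x =
      (\<Sum>\<tau>1\<in>A. \<Sum>\<tau>2\<in>A. (if snd \<tau>1 = w then if fst \<tau>1 < u then -1 else 1 else 0) *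
        (if snd \<tau>2 = v then if u < fst \<tau>2 then -1 else 1 else 0))"
    unfolding SigGamma_eq_sum_canonical_weight[OF hA]
    by (intro sum.cong refl) (simp add: canonical_weight_turn[OF hA _ _ hN hW hE hS uvw])
  also have "\<dots> = (\<Sum>\<tau>\<in>A. if snd \<tau> = w then if fst \<tau> < u then -1 else 1 else 0) *
      (\<Sum>\<tau>\<in>A. if snd \<tau> = v then if u < fst \<tau> then -1 else 1 else 0)"
    by (simp add: sum_product)
  also have "\<dots> = (\<Sum>k\<in>column_entries n A w. if k < u then -1 else 1) *
      (\<Sum>k\<in>column_entries n A v. if u < k then -1 else 1)"
    by (simp add: sum_column_entries[OF hA])
  finally show ?thesis
    by (simp add: sum_sign_pivot column_entries_counts[OF uvw(1)])
qed

lemma SigGamma_straight: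
  assumes hA: "A \<subseteq> {1..n} \<times> {1..n}"
    and hN: "one_hot n (xN n x) v" and hW: "one_hot n (xW n x) u"
    and hE: "one_hot n (xE n x) u" and hS: "one_hot n (xS n x) v"
    and u: "u \<in> {1..n}" and v: "v \<in> {1..n}"
  shows "SigGamma n A x = qq n A u - rr n A u v - ss n A u v +
    (if (u,v) \<in> A then 1 else - alpha n A u v - beta n A u v)"
proof -
  define Q where "Q j = alpha n A u j * beta n A u j
      - int (nat (alpha n A u j) choose 2) - int (nat (beta n A u j) choose 2)" for j
  define Y where "Y j = of_bool ((u,j) \<in> A) * (alpha n A u j + beta n A u j)" for j
  have "SigGamma n A x = (\<Sum>\<tau>1\<in>A. \<Sum>\<tau>2\<in>A.
      if snd \<tau>2 = snd \<tau>1 then straight_weight u v (snd \<tau>1) (fst \<tau>1) (fst \<tau>2) else 0)"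
    unfolding SigGamma_eq_sum_canonical_weight[OF hA]
    by (intro sum.cong refl) (auto simp: canonical_weight_straight[OF hA _ _ hN hW hE hS u v])
  also have "\<dots> = (\<Sum>\<tau>1\<in>A. \<Sum>c\<in>column_entries n A (snd \<tau>1). straight_weight u v (snd \<tau>1) (fst \<tau>1) c)"
    by (simp add: sum_column_entries[OF hA])
  also have "\<dots> = (\<Sum>j\<in>{1..n}. \<Sum>a\<in>column_entries n A j. \<Sum>c\<in>column_entries n A j. straight_weight u v j a c)"
    by (simp add: sum_by_columns[OF hA])
  also have "\<dots> = (\<Sum>j\<in>{1..n}. Q j + (if j = v then Y v + of_bool ((u,v) \<in> A) - alpha n A u v - beta n A u v else - Y j))"
    by (intro sum.cong refl)
      (simp add: sum_straight_weight_off_column sum_straight_weight_on_column column_entries_counts[OF u] Q_def Y_def)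
  also have "\<dots> = qq n A u + (Y v + of_bool ((u,v) \<in> A) - alpha n A u v - beta n A u v) - (\<Sum>j\<in>{1..n} - {v}. Y j)"
    using v by (simp add: sum.distrib qq_def Q_def sum.remove sum_negf)
  also have "(\<Sum>j\<in>{1..n} - {v}. Y j) = rr n A u v + ss n A u v"
    by (simp add: rr_def ss_def Y_def sum.distrib[symmetric] add.commute Int_def conj_assoc)
  finally show ?thesis
    by (simp add: Y_def)
qed

lemma length_boundary_blocks:
  assumes "length x = 4 * n"
  shows "length (xN n x) = n" "length (xE n x) = n" "length (xS n x) = n" "length (xW n x) = n"
  using assms by (simp_all add: xN_def xE_def xS_def xW_def)

lemma SigGamma_eq_0:
  assumes hA: "A \<subseteq> {1..n} \<times> {1..n}" and hx: "length x = 4 * n"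
    and hN: "one_hot n (xN n x) v" and v: "v \<in> {1..n}"
    and "xW n x \<noteq> xE n x \<or> hw (xS n x) \<noteq> 1"
  shows "SigGamma n A x = 0"
proof -
  have "canonical_weight n A x \<tau>1 \<tau>2 = 0" if \<tau>: "\<tau>1 \<in> A" "\<tau>2 \<in> A" for \<tau>1 \<tau>2
  proof (rule ccontr)
    assume "canonical_weight n A x \<tau>1 \<tau>2 \<noteq> 0"
    then have cons: "consistent n x \<tau>1 \<tau>2"
      using canonical_weight_eq[OF hA \<tau>, of x] by (simp split: if_splits)
    obtain a b c d where \<tau>12: "\<tau>1 = (a,b)" "\<tau>2 = (c,d)"
      by (cases \<tau>1; cases \<tau>2) blast
    have g: "a \<in> {1..n}" "b \<in> {1..n}" "c \<in> {1..n}" "d \<in> {1..n}"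
      using hA \<tau> \<tau>12 by auto
    obtain w where w: "w \<in> {1..n}" "\<forall>j\<in>{1..n}. column_bit n x \<tau>1 \<tau>2 (Suc n) j = (j = w)"
      using consistent_bottom_one_hot[OF hN v g] cons \<tau>12 by blast
    have "one_hot n (xS n x) w"
      using cons w by (simp add: consistent_def one_hot_def)
    then have "hw (xS n x) = 1"
      using hw_one_hot length_boundary_blocks[OF hx] w(1) by blast
    moreover have "xW n x = xE n x"
      using cons length_boundary_blocks[OF hx] by (intro list_eq_one_based_nthI) (auto simp: consistent_def)
    ultimately show False
      using assms(5) by simp
  qed
  then show ?thesis
    by (simp add: SigGamma_eq_sum_canonical_weight[OF hA])
qed

theorem mainTheorem12:
  fixes n :: nat and A :: "(nat \<times> nat) set" and x :: "bool list"
  assumes hA: "A \<subseteq> {1..n} \<times> {1..n}"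
    and hx: "length x = 4 * n"
    and one: "hw (xN n x) = 1" "hw (xW n x) = 1"
  shows
    "(xW n x \<noteq> xE n x \<or> hw (xS n x) \<noteq> 1 \<longrightarrow> SigGamma n A x = 0)
   \<and> (xN n x = xS n x \<and> xW n x = xE n x \<longrightarrow>
        (let u = onepos (xW n x); v = onepos (xN n x) in
          SigGamma n A x =
            (if (u,v) \<notin> A
             then qq n A u - rr n A u v - ss n A u v - alpha n A u v - beta n A u v
             else qq n A u - rr n A u v - ss n A u v + 1)))
   \<and> (xW n x = xE n x \<and> hw (xS n x) = 1 \<and> xN n x \<noteq> xS n x \<longrightarrow>
        (let u = onepos (xW n x); v = onepos (xN n x); w = onepos (xS n x) in
          SigGamma n A x =
            (if (u,v) \<notin> A \<and> (u,w) \<notin> A then pp n A u v w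
             else if (u,v) \<notin> A \<and> (u,w) \<in> A then pp n A u v w + alpha n A u v - beta n A u v
             else if (u,v) \<in> A \<and> (u,w) \<notin> A then pp n A u v w + beta n A u w - alpha n A u w
             else pp n A u v w + beta n A u w - alpha n A u w + alpha n A u v - beta n A u v + 1)))"
proof -
  note len = length_boundary_blocks[OF hx]
  define u where "u = onepos (xW n x)"
  define v where "v = onepos (xN n x)"
  define w where "w = onepos (xS n x)"
  have u: "u \<in> {1..n}" and hW: "one_hot n (xW n x) u"
    unfolding u_def using one_hot_onepos[OF len(4) one(2)] by simp_all
  have v: "v \<in> {1..n}" and hN: "one_hot n (xN n x) v"
    unfolding v_def using one_hot_onepos[OF len(1) one(1)] by simp_all
  have straight: "SigGamma n A x = qq n A u - rr n A u v - ss n A u v +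
      (if (u,v) \<in> A then 1 else - alpha n A u v - beta n A u v)"
    if "xN n x = xS n x" "xW n x = xE n x"
    using SigGamma_straight[OF hA hN hW _ _ u v] hN hW that by simp
  have turn: "SigGamma n A x = (beta n A u w + of_bool ((u,w) \<in> A) - alpha n A u w) *
      (alpha n A u v + of_bool ((u,v) \<in> A) - beta n A u v)"
    if "xW n x = xE n x" "hw (xS n x) = 1" "xN n x \<noteq> xS n x"
  proof -
    have w: "w \<in> {1..n}" and hS: "one_hot n (xS n x) w"
      unfolding w_def using one_hot_onepos[OF len(3) that(2)] by simp_all
    have "v \<noteq> w"
      using that(3) hN hS len by (auto intro: list_eq_one_based_nthI simp: one_hot_def)
    then show ?thesis
      using SigGamma_turn[OF hA hN hW _ hS u v w] hW that(1) by simp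
  qed
  show ?thesis
    unfolding Let_def u_def[symmetric] v_def[symmetric] w_def[symmetric]
    using SigGamma_eq_0[OF hA hx hN v] straight turn by (auto simp: pp_def algebra_simps)
qed

end
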